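(* Let $n\ge 4$ be an integer and let $QD_{2^n}=\langle a,b : a^{2^{n-1}}=b^2=1,\ bab^{-1}=a^{2^{n-2}-1}\rangle$ be the quasidihedral group of order $2^n$. Let $\Gamma_{QD_{2^n}}$ be its non-commuting graph. Then the spectrum of the distance Laplacian matrix $D^L(\Gamma_{QD_{2^n}})$ (eigenvalues counted with multiplicity, multiplicities being added if two of the listed values coincide) consists of: (a) $0$ with multiplicity $1$; (b) $2^n-2$ and $2^n$, each with multiplicity $2^{n-2}$; (c) $2^n+2^{n-1}-4$ with multiplicity $2^{n-1}-3$.
   Context: For a finite non-abelian group $G$ with centre $Z(G)$, the non-commuting graph $\Gamma_G$ is the simple undirected graph with vertex set $G\setminus Z(G)$, in which two distinct vertices $u,v$ are adjacent if and only if $uv\ne vu$. For a connected graph $H$, $d_{uv}$ denotes the length of a shortest path between $u$ and $v$; the distance matrix $D(H)$ has $(u,v)$-entry $d_{uv}$. The transmission of a vertex $v$ is $\sum_{u} d_{uv}$, and $Tr(H)$ is the diagonal matrix of vertex transmissions. The distance Laplacian matrix is $D^L(H)=Tr(H)-D(H)$. *)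

theory Defs
  imports "Jordan_Normal_Form.Char_Poly" "HOL-Library.Product_Lexorder"
begin

text \<open>Concrete model: the pair (i,j) with i < 2^(n-1), j < 2 stands for a^i b^j.
  From b a b^{-1} = a^m with m = 2^(n-2) - 1 one gets b^j a^k = a^(k m^j) b^j, hence
  (a^i b^j)(a^k b^l) = a^(i + k m^j) b^(j+l), exponents of a mod 2^(n-1), of b mod 2.\<close>

definition qd_carrier :: "nat \<Rightarrow> (nat \<times> nat) set" where
  "qd_carrier n = {(i, j). i < 2 ^ (n - 1) \<and> j < 2}"

definition qd_mult :: "nat \<Rightarrow> nat \<times> nat \<Rightarrow> nat \<times> nat \<Rightarrow> nat \<times> nat" where
  "qd_mult n x y = (case x of (i, j) \<Rightarrow> case y of (k, l) \<Rightarrow>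
      ((i + k * (2 ^ (n - 2) - 1) ^ j) mod 2 ^ (n - 1), (j + l) mod 2))"

definition centre :: "'a set \<Rightarrow> ('a \<Rightarrow> 'a \<Rightarrow> 'a) \<Rightarrow> 'a set" where
  "centre G op = {z \<in> G. \<forall>g \<in> G. op z g = op g z}"

definition nc_vertices :: "'a set \<Rightarrow> ('a \<Rightarrow> 'a \<Rightarrow> 'a) \<Rightarrow> 'a set" where
  "nc_vertices G op = G - centre G op"

definition nc_edges :: "'a set \<Rightarrow> ('a \<Rightarrow> 'a \<Rightarrow> 'a) \<Rightarrow> ('a \<times> 'a) set" where
  "nc_edges G op = {(u, v). u \<in> nc_vertices G op \<and> v \<in> nc_vertices G op \<and> u \<noteq> v
                              \<and> op u v \<noteq> op v u}"

definition nc_dist :: "'a set \<Rightarrow> ('a \<Rightarrow> 'a \<Rightarrow> 'a) \<Rightarrow> 'a \<Rightarrow> 'a \<Rightarrow> nat" where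
  "nc_dist G op u v = (LEAST k. (u, v) \<in> (nc_edges G op) ^^ k)"

definition transmission :: "'a set \<Rightarrow> ('a \<Rightarrow> 'a \<Rightarrow> 'a) \<Rightarrow> 'a \<Rightarrow> nat" where
  "transmission G op v = (\<Sum>u \<in> nc_vertices G op. nc_dist G op u v)"

text \<open>Distance Laplacian D^L = Tr - D, vertices enumerated in increasing order
  (the spectrum does not depend on the enumeration).\<close>
definition dist_laplacian :: "'a::linorder set \<Rightarrow> ('a \<Rightarrow> 'a \<Rightarrow> 'a) \<Rightarrow> real mat" where
  "dist_laplacian G op =
     (let vs = sorted_list_of_set (nc_vertices G op); m = length vs in
      mat m m (\<lambda>(i, j). (if i = j then real (transmission G op (vs ! i)) else 0)
                        - real (nc_dist G op (vs ! i) (vs ! j))))"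

end

theory Submission
  imports Defs
begin

text \<open>Two non-central elements of \<open>QD\<^bsub>2^n\<^esub>\<close> commute iff both are powers of \<open>a\<close>, or they are
  \<open>a\<^sup>i b\<close> and \<open>a\<^sup>j b\<close> with \<open>i \<equiv> j (mod 2\<^bsup>n-2\<^esup>)\<close>. Hence the non-commuting graph is the complete
  multipartite graph with one part of size \<open>2\<^bsup>n-1\<^esup> - 2\<close> and \<open>2\<^bsup>n-2\<^esup>\<close> parts of size 2; its
  distances are 1 between parts and 2 inside a part. On a complete multipartite graph with \<open>N\<close>
  vertices the distance Laplacian maps \<open>g\<close> to \<open>x \<mapsto> (N + |P\<^sub>x|) g x - \<Sum>g - \<Sum>\<^bsub>P\<^sub>x\<^esub> g\<close>, where \<open>P\<^sub>x\<close> is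
  the part of \<open>x\<close>. So the constant vector has eigenvalue 0, vectors that are constant on parts
  and sum to 0 have eigenvalue \<open>N\<close>, and \<open>e\<^sub>u - e\<^sub>v\<close> for \<open>u, v\<close> in a part \<open>P\<close> has eigenvalue
  \<open>N + |P|\<close>. Choosing a representative in every part turns these into an explicit eigenbasis, whose
  dual basis is explicit as well; the characteristic polynomial is the product of the resulting
  linear factors.\<close>

section \<open>Characteristic polynomial from an explicit eigenbasis\<close>

lemma char_poly_eq_prod_if_eigenbasis:
  fixes F p q :: "'a \<Rightarrow> 'a \<Rightarrow> real" and lam :: "'a \<Rightarrow> real"
  assumes distinct: "distinct vs"
    and eigen: "\<And>u x. u \<in> set vs \<Longrightarrow> x \<in> set vs \<Longrightarrow> (\<Sum>y\<in>set vs. F x y * p u y) = lam u * p u x"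
    and dual: "\<And>u v. u \<in> set vs \<Longrightarrow> v \<in> set vs \<Longrightarrow> (\<Sum>x\<in>set vs. q u x * p v x) = of_bool (u = v)"
  shows "char_poly (mat (length vs) (length vs) (\<lambda>(i, j). F (vs ! i) (vs ! j))) = (\<Prod>u\<in>set vs. [:- lam u, 1:])"
proof -
  define m where "m = length vs"
  define M where "M = mat m m (\<lambda>(i, j). F (vs ! i) (vs ! j))"
  define P where "P = mat m m (\<lambda>(i, j). p (vs ! j) (vs ! i))"
  define Q where "Q = mat m m (\<lambda>(i, j). q (vs ! i) (vs ! j))"
  define D where "D = mat m m (\<lambda>(i, j). if i = j then lam (vs ! i) else 0)"
  have carrier: "M \<in> carrier_mat m m" "P \<in> carrier_mat m m" "Q \<in> carrier_mat m m" "D \<in> carrier_mat m m"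
    by (auto simp: M_def P_def Q_def D_def)
  have nth_in: "i < m \<Longrightarrow> vs ! i \<in> set vs" for i
    by (simp add: m_def)
  have nth_eq: "i < m \<Longrightarrow> j < m \<Longrightarrow> vs ! i = vs ! j \<longleftrightarrow> i = j" for i j
    using distinct by (simp add: m_def nth_eq_iff_index_eq)
  have sum_nth: "(\<Sum>k = 0..<m. f (vs ! k)) = (\<Sum>x\<in>set vs. f x)" for f :: "'a \<Rightarrow> real"
    using distinct by (simp add: m_def sum.distinct_set_conv_list sum_list_sum_nth)
  have QP: "Q * P = 1\<^sub>m m"
  proof (rule eq_matI)
    fix i j assume "i < dim_row (1\<^sub>m m)" "j < dim_col (1\<^sub>m m)"
    then have ij: "i < m" "j < m" by auto
    then have "(Q * P) $$ (i, j) = (\<Sum>x\<in>set vs. q (vs ! i) x * p (vs ! j) x)"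
      using sum_nth[of "\<lambda>x. q (vs ! i) x * p (vs ! j) x"] by (simp add: P_def Q_def scalar_prod_def)
    also have "\<dots> = 1\<^sub>m m $$ (i, j)"
      using dual[OF nth_in nth_in] ij nth_eq by simp
    finally show "(Q * P) $$ (i, j) = 1\<^sub>m m $$ (i, j)" .
  qed (use carrier in auto)
  have PQ: "P * Q = 1\<^sub>m m"
    using mat_mult_left_right_inverse[OF carrier(3,2) QP] .
  have MP: "M * P = P * D"
  proof (rule eq_matI)
    fix i j assume "i < dim_row (P * D)" "j < dim_col (P * D)"
    then have ij: "i < m" "j < m" using carrier by auto
    then have "(M * P) $$ (i, j) = (\<Sum>x\<in>set vs. F (vs ! i) x * p (vs ! j) x)"
      using sum_nth[of "\<lambda>x. F (vs ! i) x * p (vs ! j) x"] by (simp add: M_def P_def scalar_prod_def)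
    also have "\<dots> = lam (vs ! j) * p (vs ! j) (vs ! i)"
      using eigen[OF nth_in nth_in] ij by simp
    also have "\<dots> = (P * D) $$ (i, j)"
      using ij by (simp add: P_def D_def scalar_prod_def if_distrib[of "\<lambda>t. _ * t"] sum.delta' cong: if_cong)
    finally show "(M * P) $$ (i, j) = (P * D) $$ (i, j)" .
  qed (use carrier in auto)
  have "M = P * D * Q"
    using carrier PQ MP by (metis assoc_mult_mat right_mult_one_mat)
  then have "char_poly M = char_poly D"
    using carrier PQ QP by (intro char_poly_similar similar_matI[of M D P Q m]) auto
  also have "\<dots> = (\<Prod>a\<leftarrow>diag_mat D. [:- a, 1:])"
    by (rule char_poly_upper_triangular[OF carrier(4)]) (simp add: D_def upper_triangular_def)
  also have "diag_mat D = map lam vs"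
    by (rule nth_equalityI) (auto simp: D_def diag_mat_def m_def)
  finally show ?thesis
    using distinct by (simp add: M_def m_def prod.distinct_set_conv_list o_def)
qed

section \<open>Distance Laplacian of a complete multipartite graph\<close>

locale complete_multipartite =
  fixes V :: "'a set" and \<kappa> :: "'a \<Rightarrow> 'b"
  assumes finite_V: "finite V"
    and two_parts: "\<exists>x\<in>V. \<exists>y\<in>V. \<kappa> x \<noteq> \<kappa> y"
begin

definition part :: "'b \<Rightarrow> 'a set" where
  "part c = {x \<in> V. \<kappa> x = c}"

lemma finite_part: "finite (part c)"
  using finite_V by (simp add: part_def)

lemma card_part_pos: "x \<in> V \<Longrightarrow> card (part (\<kappa> x)) > 0"
  using finite_V by (auto simp: card_gt_0_iff part_def)

lemma card_V_pos: "card V > 0"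
  using two_parts finite_V card_gt_0_iff by blast

lemma Int_Collect_eq_part: "V \<inter> {y. \<kappa> y = c} = part c"
  by (auto simp: part_def)

lemma sum_part_eq: "(\<Sum>y\<in>part c. g y) = (\<Sum>y\<in>V. of_bool (\<kappa> y = c) * g y :: real)"
  using finite_V by (simp add: Int_Collect_eq_part)

definition edges :: "('a \<times> 'a) set" where
  "edges = {(x, y). x \<in> V \<and> y \<in> V \<and> \<kappa> x \<noteq> \<kappa> y}"

definition mp_dist :: "'a \<Rightarrow> 'a \<Rightarrow> nat" where
  "mp_dist x y = (if x = y then 0 else if \<kappa> x = \<kappa> y then 2 else 1)"

lemma least_edges_relpow:
  assumes x: "x \<in> V" and y: "y \<in> V"
  shows "(LEAST k. (x, y) \<in> edges ^^ k) = mp_dist x y"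
proof (cases "x = y")
  case True
  then show ?thesis
    by (simp add: mp_dist_def)
next
  case False
  then have not0: "(x, y) \<notin> edges ^^ 0"
    by simp
  show ?thesis
  proof (cases "\<kappa> x = \<kappa> y")
    case True
    obtain z where z: "z \<in> V" "\<kappa> z \<noteq> \<kappa> x"
      using two_parts by metis
    with x y True have "(x, z) \<in> edges" "(z, y) \<in> edges"
      by (auto simp: edges_def)
    then have "(x, y) \<in> edges ^^ 2"
      by (auto simp: numeral_2_eq_2)
    moreover have "2 \<le> k" if "(x, y) \<in> edges ^^ k" for k
    proof (rule ccontr)
      assume "\<not> 2 \<le> k"
      then have "k = 0 \<or> k = 1"
        by auto
      with that not0 True show False
        by (auto simp: edges_def)
    qed
    ultimately have "(LEAST k. (x, y) \<in> edges ^^ k) = 2"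
      by (rule Least_equality)
    then show ?thesis
      using False True by (simp add: mp_dist_def)
  next
    case False
    with x y have "(x, y) \<in> edges ^^ 1"
      by (simp add: edges_def)
    then have "(LEAST k. (x, y) \<in> edges ^^ k) = 1"
      using not0 by (intro Least_equality) (auto simp: Suc_le_eq intro: gr0I)
    then show ?thesis
      using \<open>x \<noteq> y\<close> False by (simp add: mp_dist_def)
  qed
qed

definition laplacian :: "'a \<Rightarrow> 'a \<Rightarrow> real" where
  "laplacian x y = (if x = y then real (\<Sum>z\<in>V. mp_dist z x) else 0) - real (mp_dist x y)"

lemma laplacian_apply:
  assumes x: "x \<in> V"
  shows "(\<Sum>y\<in>V. laplacian x y * g y)
    = (real (card V) + card (part (\<kappa> x))) * g x - (\<Sum>y\<in>V. g y) - (\<Sum>y\<in>part (\<kappa> x). g y)"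
proof -
  have dist: "real (mp_dist y z) = 1 + of_bool (\<kappa> y = \<kappa> z) - 2 * of_bool (y = z)" for y z
    by (simp add: mp_dist_def)
  have delta: "(\<Sum>y\<in>V. of_bool (y = x) * f y) = f x" for f :: "'a \<Rightarrow> real"
    using finite_V x by simp
  have transmission_eq: "real (\<Sum>z\<in>V. mp_dist z x) = real (card V) + card (part (\<kappa> x)) - 2"
    using delta[of "\<lambda>_. 1"] sum_part_eq[of "\<lambda>_. 1" "\<kappa> x"]
    by (simp add: dist sum.distrib sum_subtractf flip: sum_distrib_left)
  then have "laplacian x y * g y = (real (card V) + card (part (\<kappa> x))) * (of_bool (y = x) * g y)
      - g y - of_bool (\<kappa> y = \<kappa> x) * g y" for y
    unfolding laplacian_def transmission_eq by (simp add: mp_dist_def algebra_simps)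
  then show ?thesis
    using delta[of g] sum_part_eq[of g "\<kappa> x"]
    by (simp add: sum_subtractf flip: sum_distrib_left)
qed

definition rep :: "'b \<Rightarrow> 'a" where
  "rep c = (SOME x. x \<in> part c)"

definition base :: 'a where
  "base = rep (\<kappa> (SOME x. x \<in> V))"

lemma rep_in_part: "x \<in> V \<Longrightarrow> rep (\<kappa> x) \<in> part (\<kappa> x)"
  unfolding rep_def by (rule someI[of _ x]) (simp add: part_def)

lemma rep_in_V: "x \<in> V \<Longrightarrow> rep (\<kappa> x) \<in> V"
  and \<kappa>_rep: "x \<in> V \<Longrightarrow> \<kappa> (rep (\<kappa> x)) = \<kappa> x"
  using rep_in_part by (auto simp: part_def)

lemma base_in_V: "base \<in> V"
  and rep_base: "rep (\<kappa> base) = base"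
proof -
  obtain x where x: "x \<in> V" "base = rep (\<kappa> x)"
    using two_parts by (metis base_def someI)
  then show "base \<in> V" "rep (\<kappa> base) = base"
    by (simp_all add: rep_in_V \<kappa>_rep)
qed

lemma representative_cases:
  assumes "u \<in> V"
  obtains (base) "u = base"
    | (rep) "u = rep (\<kappa> u)" "\<kappa> u \<noteq> \<kappa> base"
    | (other) "u \<noteq> rep (\<kappa> u)"
  using rep_base by metis

text \<open>The \<open>dualvec u\<close> are the rows of the inverse of the matrix with columns \<open>eigvec u\<close>.\<close>

definition eigvec :: "'a \<Rightarrow> 'a \<Rightarrow> real" where
  "eigvec u x =
    (if u = base then 1
     else if u = rep (\<kappa> u)
       then real (card (part (\<kappa> base))) * of_bool (\<kappa> x = \<kappa> u)
         - real (card (part (\<kappa> u))) * of_bool (\<kappa> x = \<kappa> base)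
     else of_bool (x = u) - of_bool (x = rep (\<kappa> u)))"

definition eigval :: "'a \<Rightarrow> real" where
  "eigval u = (if u = base then 0 else if u = rep (\<kappa> u) then real (card V)
    else real (card V) + card (part (\<kappa> u)))"

definition dualvec :: "'a \<Rightarrow> 'a \<Rightarrow> real" where
  "dualvec u x =
    (if u = base then 1 / real (card V)
     else if u = rep (\<kappa> u)
       then (of_bool (\<kappa> x = \<kappa> u) / real (card (part (\<kappa> u))) - 1 / real (card V))
         / real (card (part (\<kappa> base)))
     else of_bool (x = u) - of_bool (\<kappa> x = \<kappa> u) / real (card (part (\<kappa> u))))"

lemma sum_eigvec:
  assumes u: "u \<in> V"
  shows "(\<Sum>x\<in>V. eigvec u x) = of_bool (u = base) * card V"
  using u
proof (cases rule: representative_cases)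
  case base
  then show ?thesis
    by (simp add: eigvec_def)
next
  case rep
  then show ?thesis
    using finite_V by (simp add: eigvec_def sum_subtractf Int_Collect_eq_part flip: sum_distrib_left)
next
  case other
  then show ?thesis
    using finite_V u rep_in_V[OF u] by (auto simp: eigvec_def sum_subtractf)
qed

lemma sum_part_eigvec_rep:
  assumes u: "u = rep (\<kappa> u)" and x: "x \<in> V"
  shows "(\<Sum>y\<in>part (\<kappa> x). eigvec u y) = card (part (\<kappa> x)) * eigvec u x"
proof -
  have "eigvec u y = eigvec u x" if "y \<in> part (\<kappa> x)" for y
    using that u by (simp add: eigvec_def part_def)
  then show ?thesis
    by simp
qed

lemma sum_part_eigvec_other:
  assumes u: "u \<in> V" "u \<noteq> rep (\<kappa> u)"
  shows "(\<Sum>y\<in>part c. eigvec u y) = 0"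
proof -
  have "u \<noteq> base"
    using u rep_base by auto
  then have "(\<Sum>y\<in>part c. eigvec u y)
      = (\<Sum>y\<in>part c. of_bool (y = u)) - (\<Sum>y\<in>part c. of_bool (y = rep (\<kappa> u)))"
    using u by (simp add: eigvec_def sum_subtractf)
  also have "\<dots> = 0"
    using finite_part u rep_in_part[OF u(1)] by (simp add: of_bool_def part_def)
  finally show ?thesis .
qed

lemma laplacian_eigvec:
  assumes u: "u \<in> V" and x: "x \<in> V"
  shows "(\<Sum>y\<in>V. laplacian x y * eigvec u y) = eigval u * eigvec u x"
proof -
  have "(\<Sum>y\<in>V. laplacian x y * eigvec u y) = (real (card V) + card (part (\<kappa> x))) * eigvec u x
      - of_bool (u = base) * card V - (\<Sum>y\<in>part (\<kappa> x). eigvec u y)"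
    using laplacian_apply[OF x, of "eigvec u"] sum_eigvec[OF u] by simp
  also have "\<dots> = eigval u * eigvec u x"
    using u
  proof (cases rule: representative_cases)
    case base
    then show ?thesis
      using sum_part_eigvec_rep[OF _ x] rep_base by (simp add: eigval_def eigvec_def)
  next
    case rep
    then show ?thesis
      using sum_part_eigvec_rep[OF _ x] rep_base by (auto simp: eigval_def algebra_simps)
  next
    case other
    moreover have "eigvec u x = 0" if "\<kappa> x \<noteq> \<kappa> u"
      using that other \<kappa>_rep[OF u] rep_base by (auto simp: eigvec_def)
    ultimately show ?thesis
      using sum_part_eigvec_other[OF u] rep_base
      by (cases "\<kappa> x = \<kappa> u") (auto simp: eigval_def algebra_simps)
  qed
  finally show ?thesis .
qed

lemma dualvec_apply:
  fixes g :: "'a \<Rightarrow> real"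
  assumes u: "u \<in> V"
  shows "(\<Sum>x\<in>V. dualvec u x * g x) =
    (if u = base then (\<Sum>x\<in>V. g x) / real (card V)
     else if u = rep (\<kappa> u)
       then ((\<Sum>x\<in>part (\<kappa> u). g x) / real (card (part (\<kappa> u))) - (\<Sum>x\<in>V. g x) / real (card V))
         / real (card (part (\<kappa> base)))
     else g u - (\<Sum>x\<in>part (\<kappa> u). g x) / real (card (part (\<kappa> u))))"
  using u
proof (cases rule: representative_cases)
  case base
  then have "(\<Sum>x\<in>V. dualvec u x * g x) = (\<Sum>x\<in>V. g x / real (card V))"
    by (simp add: dualvec_def)
  then show ?thesis
    using base by (simp add: sum_divide_distrib)
next
  case rep
  then have "(\<Sum>x\<in>V. dualvec u x * g x) = (\<Sum>x\<in>V. (of_bool (\<kappa> x = \<kappa> u) * g x / real (card (part (\<kappa> u)))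
      - g x / real (card V)) / real (card (part (\<kappa> base))))"
    using rep_base by (intro sum.cong) (auto simp: dualvec_def diff_divide_distrib left_diff_distrib)
  also have "\<dots> = ((\<Sum>x\<in>part (\<kappa> u). g x) / real (card (part (\<kappa> u))) - (\<Sum>x\<in>V. g x) / real (card V))
      / real (card (part (\<kappa> base)))"
    unfolding sum_part_eq by (simp only: sum_divide_distrib[symmetric] sum_subtractf)
  finally show ?thesis
    using rep rep_base by auto
next
  case other
  then have "(\<Sum>x\<in>V. dualvec u x * g x)
      = (\<Sum>x\<in>V. of_bool (x = u) * g x - of_bool (\<kappa> x = \<kappa> u) * g x / real (card (part (\<kappa> u))))"
    using rep_base by (intro sum.cong) (auto simp: dualvec_def left_diff_distrib)
  also have "\<dots> = (\<Sum>x\<in>V. of_bool (x = u) * g x)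
      - (\<Sum>x\<in>V. of_bool (\<kappa> x = \<kappa> u) * g x) / real (card (part (\<kappa> u)))"
    by (simp only: sum_divide_distrib[symmetric] sum_subtractf)
  also have "\<dots> = g u - (\<Sum>x\<in>part (\<kappa> u). g x) / real (card (part (\<kappa> u)))"
    using finite_V u unfolding sum_part_eq by simp
  finally show ?thesis
    using other rep_base by auto
qed

lemma dualvec_eigvec:
  assumes u: "u \<in> V" and v: "v \<in> V"
  shows "(\<Sum>x\<in>V. dualvec u x * eigvec v x) = of_bool (u = v)"
proof -
  have pos: "card V > 0" "card (part (\<kappa> u)) > 0" "card (part (\<kappa> base)) > 0"
    using card_V_pos card_part_pos u base_in_V by auto
  show ?thesis
  proof (cases "v = rep (\<kappa> v)")
    case True
    then have "(\<Sum>x\<in>V. dualvec u x * eigvec v x) =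
      (if u = base then of_bool (v = base)
       else if u = rep (\<kappa> u) then (eigvec v u - of_bool (v = base)) / real (card (part (\<kappa> base)))
       else 0)"
      using pos by (simp add: dualvec_apply[OF u] sum_eigvec[OF v] sum_part_eigvec_rep[OF _ u])
    also have "\<dots> = of_bool (u = v)"
      using True pos rep_base \<kappa>_rep[OF u] \<kappa>_rep[OF v] by (auto simp: eigvec_def)
    finally show ?thesis .
  next
    case False
    then have "v \<noteq> base"
      using rep_base by auto
    with False have "(\<Sum>x\<in>V. dualvec u x * eigvec v x) =
      (if u = base \<or> u = rep (\<kappa> u) then 0 else eigvec v u)"
      by (simp add: dualvec_apply[OF u] sum_eigvec[OF v] sum_part_eigvec_other[OF v])
    also have "\<dots> = of_bool (u = v)"
      using False rep_base \<kappa>_rep[OF v] by (auto simp: eigvec_def)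
    finally show ?thesis .
  qed
qed

lemma prod_eigval:
  "(\<Prod>u\<in>V. [:- eigval u, 1:]) = [:0, 1:] * [:- real (card V), 1:] ^ (card (\<kappa> ` V) - 1)
     * (\<Prod>c\<in>\<kappa> ` V. [:- (real (card V) + card (part c)), 1:] ^ (card (part c) - 1))"
proof -
  let ?f = "\<lambda>u. [:- eigval u, 1:]"
  have prod_part: "(\<Prod>u\<in>part c. ?f u)
      = ?f (rep c) * [:- (real (card V) + card (part c)), 1:] ^ (card (part c) - 1)"
    if "c \<in> \<kappa> ` V" for c
  proof -
    have rep: "rep c \<in> part c"
      using that rep_in_part by blast
    then have "(\<Prod>u\<in>part c. ?f u) = ?f (rep c) * (\<Prod>u\<in>part c - {rep c}. ?f u)"
      by (rule prod.remove[OF finite_part])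
    also have "(\<Prod>u\<in>part c - {rep c}. ?f u) = (\<Prod>u\<in>part c - {rep c}. [:- (real (card V) + card (part c)), 1:])"
      using rep_base by (intro prod.cong) (auto simp: eigval_def part_def)
    also have "\<dots> = [:- (real (card V) + card (part c)), 1:] ^ (card (part c) - 1)"
      using rep finite_part by simp
    finally show ?thesis .
  qed
  have prod_rep: "(\<Prod>c\<in>\<kappa> ` V. ?f (rep c)) = [:0, 1:] * [:- real (card V), 1:] ^ (card (\<kappa> ` V) - 1)"
  proof -
    have base: "\<kappa> base \<in> \<kappa> ` V"
      using base_in_V by blast
    then have "(\<Prod>c\<in>\<kappa> ` V. ?f (rep c)) = ?f (rep (\<kappa> base)) * (\<Prod>c\<in>\<kappa> ` V - {\<kappa> base}. ?f (rep c))"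
      using finite_V by (intro prod.remove) auto
    also have "(\<Prod>c\<in>\<kappa> ` V - {\<kappa> base}. ?f (rep c)) = (\<Prod>c\<in>\<kappa> ` V - {\<kappa> base}. [:- real (card V), 1:])"
      using rep_base \<kappa>_rep by (intro prod.cong) (auto simp: eigval_def, metis)
    also have "\<dots> = [:- real (card V), 1:] ^ (card (\<kappa> ` V) - 1)"
      using base finite_V by simp
    finally show ?thesis
      using rep_base by (simp add: eigval_def)
  qed
  have "(\<Prod>u\<in>V. ?f u) = (\<Prod>c\<in>\<kappa> ` V. \<Prod>u\<in>part c. ?f u)"
    using prod.group[of V "\<kappa> ` V" \<kappa> ?f] finite_V by (simp add: part_def)
  also have "\<dots> = (\<Prod>c\<in>\<kappa> ` V. ?f (rep c) * [:- (real (card V) + card (part c)), 1:] ^ (card (part c) - 1))"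
    using prod_part by (rule prod.cong[OF refl])
  also have "\<dots> = (\<Prod>c\<in>\<kappa> ` V. ?f (rep c))
      * (\<Prod>c\<in>\<kappa> ` V. [:- (real (card V) + card (part c)), 1:] ^ (card (part c) - 1))"
    by (rule prod.distrib)
  finally show ?thesis
    unfolding prod_rep .
qed

theorem char_poly_laplacian:
  assumes "distinct vs" and "set vs = V"
  shows "char_poly (mat (length vs) (length vs) (\<lambda>(i, j). laplacian (vs ! i) (vs ! j)))
    = [:0, 1:] * [:- real (card V), 1:] ^ (card (\<kappa> ` V) - 1)
      * (\<Prod>c\<in>\<kappa> ` V. [:- (real (card V) + card (part c)), 1:] ^ (card (part c) - 1))"
  using char_poly_eq_prod_if_eigenbasis[OF assms(1), where F = laplacian and p = eigvec and q = dualvec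
      and lam = eigval]
    laplacian_eigvec dualvec_eigvec prod_eigval assms(2)
  by simp

end

lemma char_poly_dist_laplacian_if_commuting_parts:
  fixes G :: "'a::linorder set" and op :: "'a \<Rightarrow> 'a \<Rightarrow> 'a" and \<kappa> :: "'a \<Rightarrow> 'b"
  defines "V \<equiv> nc_vertices G op"
  assumes finite: "finite V"
    and commute_iff: "\<And>x y. x \<in> V \<Longrightarrow> y \<in> V \<Longrightarrow> op x y = op y x \<longleftrightarrow> \<kappa> x = \<kappa> y"
    and two_parts: "\<exists>x\<in>V. \<exists>y\<in>V. \<kappa> x \<noteq> \<kappa> y"
  shows "char_poly (dist_laplacian G op)
    = [:0, 1:] * [:- real (card V), 1:] ^ (card (\<kappa> ` V) - 1)
      * (\<Prod>c\<in>\<kappa> ` V. [:- (real (card V) + card {x \<in> V. \<kappa> x = c}), 1:] ^ (card {x \<in> V. \<kappa> x = c} - 1))"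
proof -
  interpret complete_multipartite V \<kappa>
    using finite two_parts by unfold_locales
  have "nc_edges G op = edges"
    using commute_iff unfolding nc_edges_def V_def[symmetric] by (auto simp: edges_def)
  then have nc_dist_eq: "nc_dist G op x y = mp_dist x y" if "x \<in> V" "y \<in> V" for x y
    unfolding nc_dist_def using least_edges_relpow that by simp
  define vs where "vs = sorted_list_of_set V"
  have vs: "distinct vs" "set vs = V"
    using finite by (auto simp: vs_def)
  have "dist_laplacian G op = mat (length vs) (length vs) (\<lambda>(i, j). laplacian (vs ! i) (vs ! j))"
    unfolding dist_laplacian_def Let_def V_def[symmetric] vs_def[symmetric]
  proof (rule cong_mat)
    fix i j assume ij: "i < length vs" "j < length vs"
    then have "vs ! i \<in> V" "vs ! j \<in> V" "vs ! i = vs ! j \<longleftrightarrow> i = j"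
      using vs nth_mem nth_eq_iff_index_eq by blast+
    then show "(case (i, j) of (i, j) \<Rightarrow> (if i = j then real (transmission G op (vs ! i)) else 0)
        - real (nc_dist G op (vs ! i) (vs ! j))) = (case (i, j) of (i, j) \<Rightarrow> laplacian (vs ! i) (vs ! j))"
      by (auto simp: laplacian_def transmission_def nc_dist_eq V_def[symmetric] intro!: sum.cong)
  qed simp_all
  then show ?thesis
    using char_poly_laplacian[OF vs] by (simp add: part_def)
qed

section \<open>The non-commuting graph of the quasidihedral group\<close>

lemma two_power_dvd_mult_iff:
  fixes d :: int
  assumes "k \<ge> 2"
  shows "2 * 2 ^ k dvd (2 ^ k - 2) * d \<longleftrightarrow> 2 ^ k dvd d"
proof -
  obtain m where k: "k = Suc (Suc m)"
    using assms by (metis add_2_eq_Suc le_iff_add)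
  have "(2::int) ^ k - 2 = 2 * (2 * 2 ^ m - 1)"
    by (simp add: k)
  then have "2 * 2 ^ k dvd (2 ^ k - 2) * d \<longleftrightarrow> 2 ^ k dvd (2 * 2 ^ m - 1) * d"
    by (simp only: mult.assoc dvd_mult_cancel_left) simp
  moreover have "coprime ((2::int) ^ k) (2 * 2 ^ m - 1)"
    by simp
  ultimately show ?thesis
    using coprime_dvd_mult_right_iff by blast
qed

lemma dvd_iff_eq_0_or_eq_self:
  fixes h i :: nat
  assumes "i < 2 * h"
  shows "h dvd i \<longleftrightarrow> i = 0 \<or> i = h"
proof
  assume "h dvd i"
  then obtain c where "i = h * c" ..
  with assms have "c < 2"
    by (metis mult.commute mult_less_cancel2)
  then show "i = 0 \<or> i = h"
    using \<open>i = h * c\<close> less_2_cases by fastforce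
qed auto

lemma power_diff_1_eq:
  assumes "n \<ge> 2"
  shows "(2::'a::comm_semiring_1) ^ (n - 1) = 2 * 2 ^ (n - 2)"
proof -
  have "n - 1 = Suc (n - 2)"
    using assms by arith
  then show ?thesis
    by (simp only: power_Suc)
qed

lemma qd_carrier_eq:
  assumes "n \<ge> 4"
  shows "qd_carrier n = {(i, j). i < 2 * 2 ^ (n - 2) \<and> j < 2}"
proof -
  have "n \<ge> 2"
    using assms by simp
  then show ?thesis
    unfolding qd_carrier_def power_diff_1_eq[OF \<open>n \<ge> 2\<close>] by simp
qed

lemma nat_mod_eq_iff_int_dvd: "(a::nat) mod m = b mod m \<longleftrightarrow> int m dvd int a - int b"
  by (metis mod_eq_dvd_iff of_nat_eq_iff of_nat_mod)

lemma qd_mult_commute_iff: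
  assumes n: "n \<ge> 4" and x: "(i, j) \<in> qd_carrier n" and y: "(k, l) \<in> qd_carrier n"
  shows "qd_mult n (i, j) (k, l) = qd_mult n (k, l) (i, j) \<longleftrightarrow> 2 ^ (n - 2) dvd int i * l - int k * j"
proof -
  define h :: nat where "h = 2 ^ (n - 2)"
  have two_h: "(2::nat) ^ (n - 1) = 2 * h"
    unfolding h_def using n by (intro power_diff_1_eq) simp
  have "h \<ge> 1"
    by (simp add: h_def)
  then have pow: "int ((h - 1) ^ m) = 1 + int m * (int h - 2)" if "m < 2" for m
    using less_2_cases[OF that] by (auto simp: of_nat_diff)
  have jl: "j < 2" "l < 2"
    using x y by (simp_all add: qd_carrier_def)
  have "qd_mult n (i, j) (k, l) = qd_mult n (k, l) (i, j)
      \<longleftrightarrow> (i + k * (h - 1) ^ j) mod (2 * h) = (k + i * (h - 1) ^ l) mod (2 * h)"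
    unfolding qd_mult_def h_def[symmetric] two_h by (simp add: add.commute[of j l])
  also have "\<dots> \<longleftrightarrow> int (2 * h) dvd int (i + k * (h - 1) ^ j) - int (k + i * (h - 1) ^ l)"
    by (rule nat_mod_eq_iff_int_dvd)
  txt \<open>For \<open>m < 2\<close> the twist \<open>(h - 1)\<^sup>m\<close> equals \<open>1 + m (h - 2)\<close>, so the difference is bilinear.\<close>
  also have "int (i + k * (h - 1) ^ j) - int (k + i * (h - 1) ^ l) = (int h - 2) * (int k * j - int i * l)"
    by (simp only: of_nat_add of_nat_mult pow[OF jl(1)] pow[OF jl(2)]) (simp add: algebra_simps)
  also have "int (2 * h) dvd (int h - 2) * (int k * j - int i * l) \<longleftrightarrow> int h dvd int k * j - int i * l"
    using two_power_dvd_mult_iff[of "n - 2"] n by (simp add: h_def)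
  also have "\<dots> \<longleftrightarrow> int h dvd int i * l - int k * j"
    by (simp add: dvd_diff_commute)
  finally show ?thesis
    by (simp add: h_def)
qed

lemma nc_vertices_qd:
  assumes n: "n \<ge> 4"
  shows "nc_vertices (qd_carrier n) (qd_mult n)
    = {(i, j). i < 2 * 2 ^ (n - 2) \<and> j < 2 \<and> (j = 1 \<or> \<not> 2 ^ (n - 2) dvd i)}"
proof -
  have h: "(4::nat) \<le> 2 ^ (n - 2)"
    using n power_increasing[of 2 "n - 2" "2::nat"] by simp
  have "(i, j) \<in> centre (qd_carrier n) (qd_mult n) \<longleftrightarrow> (i, j) \<in> qd_carrier n \<and> j = 0 \<and> 2 ^ (n - 2) dvd i"
    for i j
  proof
    assume "(i, j) \<in> centre (qd_carrier n) (qd_mult n)"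
    then have x: "(i, j) \<in> qd_carrier n"
      and central: "\<And>y. y \<in> qd_carrier n \<Longrightarrow> qd_mult n (i, j) y = qd_mult n y (i, j)"
      by (auto simp: centre_def)
    have "(1, 0) \<in> qd_carrier n" "(0, 1) \<in> qd_carrier n"
      using h by (simp_all add: qd_carrier_eq[OF n])
    then have "2 ^ (n - 2) dvd - int j" "2 ^ (n - 2) dvd int i"
      using central qd_mult_commute_iff[OF n x, of 1 0] qd_mult_commute_iff[OF n x, of 0 1] by auto
    then have "2 ^ (n - 2) dvd j" "2 ^ (n - 2) dvd i"
      by (simp_all flip: int_dvd_int_iff)
    moreover have "j < 2 ^ (n - 2)"
      using x h by (simp add: qd_carrier_def)
    ultimately show "(i, j) \<in> qd_carrier n \<and> j = 0 \<and> 2 ^ (n - 2) dvd i"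
      using x by (auto dest: nat_dvd_not_less)
  next
    assume "(i, j) \<in> qd_carrier n \<and> j = 0 \<and> 2 ^ (n - 2) dvd i"
    then show "(i, j) \<in> centre (qd_carrier n) (qd_mult n)"
      by (auto simp: centre_def qd_mult_commute_iff[OF n] simp flip: int_dvd_int_iff)
  qed
  then show ?thesis
    by (auto simp: nc_vertices_def qd_carrier_eq[OF n])
qed

text \<open>Labels the parts of the non-commuting graph: all non-central powers of \<open>a\<close> get the label
  \<open>2\<^bsup>n-2\<^esup>\<close>, and \<open>a\<^sup>i b\<close> gets \<open>i mod 2\<^bsup>n-2\<^esup>\<close>.\<close>

definition qd_part :: "nat \<Rightarrow> nat \<times> nat \<Rightarrow> nat" where
  "qd_part n x = (if snd x = 0 then 2 ^ (n - 2) else fst x mod 2 ^ (n - 2))"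

lemma qd_mult_commute_iff_qd_part:
  assumes n: "n \<ge> 4"
    and x: "x \<in> nc_vertices (qd_carrier n) (qd_mult n)" and y: "y \<in> nc_vertices (qd_carrier n) (qd_mult n)"
  shows "qd_mult n x y = qd_mult n y x \<longleftrightarrow> qd_part n x = qd_part n y"
proof -
  obtain i j k l where xy: "x = (i, j)" "y = (k, l)"
    by fastforce
  define h :: nat where "h = 2 ^ (n - 2)"
  have "h > 0"
    by (simp add: h_def)
  then have mod_ne: "i mod h \<noteq> h" "k mod h \<noteq> h"
    using mod_less_divisor[of h i] mod_less_divisor[of h k] by linarith+
  have "i < 2 * h \<and> j < 2 \<and> (j = 1 \<or> \<not> h dvd i)" "k < 2 * h \<and> l < 2 \<and> (l = 1 \<or> \<not> h dvd k)"
    using x y unfolding xy nc_vertices_qd[OF n] h_def by simp_all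
  then have carrier: "(i, j) \<in> qd_carrier n" "(k, l) \<in> qd_carrier n"
    and noncentral: "j = 1 \<or> \<not> h dvd i" "l = 1 \<or> \<not> h dvd k"
    and jl: "j < 2" "l < 2"
    by (simp_all add: qd_carrier_eq[OF n] h_def)
  have "qd_mult n x y = qd_mult n y x \<longleftrightarrow> int h dvd int i * l - int k * j"
    using qd_mult_commute_iff[OF n carrier] by (simp add: xy h_def)
  also have "\<dots> \<longleftrightarrow> qd_part n x = qd_part n y"
    using less_2_cases[OF jl(1)] less_2_cases[OF jl(2)] noncentral mod_ne
    by (auto simp: xy qd_part_def h_def[symmetric] nat_mod_eq_iff_int_dvd)
  finally show ?thesis .
qed

lemma qd_part_image:
  assumes n: "n \<ge> 4"
  shows "qd_part n ` nc_vertices (qd_carrier n) (qd_mult n) = {..2 ^ (n - 2)}"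
proof -
  define h :: nat where "h = 2 ^ (n - 2)"
  have h: "h \<ge> 4"
    using n power_increasing[of 2 "n - 2" "2::nat"] by (simp add: h_def)
  have V: "nc_vertices (qd_carrier n) (qd_mult n) = {(i, j). i < 2 * h \<and> j < 2 \<and> (j = 1 \<or> \<not> h dvd i)}"
    unfolding nc_vertices_qd[OF n] h_def ..
  have "c \<in> qd_part n ` nc_vertices (qd_carrier n) (qd_mult n)" if "c \<le> h" for c
  proof (cases "c = h")
    case True
    have "\<not> h dvd 1"
      using h by simp
    with h True show ?thesis
      unfolding V by (intro image_eqI[of _ _ "(1, 0)"]) (auto simp: qd_part_def h_def)
  next
    case False
    with that show ?thesis
      unfolding V by (intro image_eqI[of _ _ "(c, 1)"]) (auto simp: qd_part_def h_def)
  qed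
  moreover have "qd_part n x \<le> h" for x
    using mod_less_divisor[of h "fst x"] by (simp add: qd_part_def h_def)
  ultimately show ?thesis
    by (auto simp: h_def)
qed

lemma nc_vertices_qd_eq_Un:
  assumes n: "n \<ge> 4"
  shows "nc_vertices (qd_carrier n) (qd_mult n)
    = (\<lambda>i. (i, 0)) ` ({..<2 * 2 ^ (n - 2)} - {0, 2 ^ (n - 2)}) \<union> (\<lambda>i. (i, 1)) ` {..<2 * 2 ^ (n - 2)}"
proof -
  have "2 ^ (n - 2) dvd i \<longleftrightarrow> i \<in> {0, 2 ^ (n - 2)}" if "i < 2 * 2 ^ (n - 2)" for i :: nat
    using dvd_iff_eq_0_or_eq_self[OF that] by simp
  then show ?thesis
    unfolding nc_vertices_qd[OF n] by (force elim: less_2_cases[elim_format])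
qed

lemma card_nc_vertices_qd:
  assumes n: "n \<ge> 4"
  shows "card (nc_vertices (qd_carrier n) (qd_mult n)) = 2 ^ n - 2"
proof -
  define h :: nat where "h = 2 ^ (n - 2)"
  obtain m where "n = m + 4"
    using n by (metis add.commute le_Suc_ex)
  then have "h > 0" "2 ^ n = 4 * h"
    by (simp_all add: h_def power_add)
  then have "card ((\<lambda>i. (i, 0::nat)) ` ({..<2 * h} - {0, h})) + card ((\<lambda>i. (i, 1::nat)) ` {..<2 * h}) = 2 ^ n - 2"
    by (simp add: card_image inj_on_def card_Diff_subset)
  then show ?thesis
    unfolding nc_vertices_qd_eq_Un[OF n] h_def[symmetric] by (subst card_Un_disjoint) auto
qed

lemma card_qd_part_fibre_top:
  assumes n: "n \<ge> 4"
  shows "card {x \<in> nc_vertices (qd_carrier n) (qd_mult n). qd_part n x = 2 ^ (n - 2)} = 2 ^ (n - 1) - 2"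
proof -
  define h :: nat where "h = 2 ^ (n - 2)"
  have "h > 0" "2 ^ (n - 1) = 2 * h"
    unfolding h_def using n by (simp, intro power_diff_1_eq, simp)
  moreover have "i mod h \<noteq> h" for i
    using mod_less_divisor[OF \<open>h > 0\<close>, of i] by linarith
  then have "{x \<in> nc_vertices (qd_carrier n) (qd_mult n). qd_part n x = h} = (\<lambda>i. (i, 0)) ` ({..<2 * h} - {0, h})"
    unfolding nc_vertices_qd_eq_Un[OF n] h_def[symmetric] by (auto simp: qd_part_def h_def)
  ultimately show ?thesis
    by (simp add: h_def[symmetric] card_image inj_on_def card_Diff_subset)
qed

lemma card_qd_part_fibre:
  assumes n: "n \<ge> 4" and c: "c < 2 ^ (n - 2)"
  shows "card {x \<in> nc_vertices (qd_carrier n) (qd_mult n). qd_part n x = c} = 2"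
proof -
  define h :: nat where "h = 2 ^ (n - 2)"
  have "i mod h = (if i < h then i else i - h)" if "i < 2 * h" for i
    using that by (auto simp: le_mod_geq)
  then have "{i. i < 2 * h \<and> i mod h = c} = {c, c + h}"
    using c by (auto simp: h_def)
  moreover have "{x \<in> nc_vertices (qd_carrier n) (qd_mult n). qd_part n x = c}
      = (\<lambda>i. (i, 1)) ` {i. i < 2 * h \<and> i mod h = c}"
    using c unfolding nc_vertices_qd_eq_Un[OF n] h_def[symmetric] by (auto simp: qd_part_def h_def)
  ultimately show ?thesis
    using c by (simp add: h_def)
qed

lemma dist_laplacian_factors_qd:
  assumes n: "n \<ge> 4"
  defines "V \<equiv> nc_vertices (qd_carrier n) (qd_mult n)"
  shows "[:- real (card V), 1:] ^ (card (qd_part n ` V) - 1)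
      * (\<Prod>c\<in>qd_part n ` V. [:- (real (card V) + card {x \<in> V. qd_part n x = c}), 1:]
          ^ (card {x \<in> V. qd_part n x = c} - 1))
    = [:- (2 ^ n - 2), 1:] ^ (2 ^ (n - 2))
      * ([:- (2 ^ n), 1:] ^ (2 ^ (n - 2)) * [:- (2 ^ n + 2 ^ (n - 1) - 4), 1:] ^ (2 ^ (n - 1) - 3))"
proof -
  define h :: nat where "h = 2 ^ (n - 2)"
  define F where "F c = [:- (real (card V) + card {x \<in> V. qd_part n x = c}), 1:]
    ^ (card {x \<in> V. qd_part n x = c} - 1)" for c
  have "(2::nat) \<le> 2 ^ n" "(2::nat) \<le> 2 ^ (n - 1)"
    using n power_increasing[of 1 n "2::nat"] power_increasing[of 1 "n - 1" "2::nat"] by simp_all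
  then have card_V: "real (card V) = 2 ^ n - 2"
    and card_top: "real (card {x \<in> V. qd_part n x = h}) = 2 ^ (n - 1) - 2"
    using card_nc_vertices_qd[OF n] card_qd_part_fibre_top[OF n] by (simp_all add: V_def h_def of_nat_diff)
  have card_top_minus_1: "card {x \<in> V. qd_part n x = h} - 1 = 2 ^ (n - 1) - 3"
    using card_qd_part_fibre_top[OF n] by (simp add: V_def h_def)
  have image: "qd_part n ` V = {..h}"
    unfolding V_def h_def by (rule qd_part_image[OF n])
  have "(\<Prod>c\<in>qd_part n ` V. F c) = (\<Prod>c<h. F c) * F h"
    unfolding image lessThan_Suc_atMost[symmetric] by (rule prod.lessThan_Suc)
  also have "(\<Prod>c<h. F c) = (\<Prod>c<h. [:- (2 ^ n), 1:])"
    by (rule prod.cong) (simp_all add: F_def card_V card_qd_part_fibre[OF n, folded V_def] h_def)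
  also have "F h = [:- (2 ^ n + 2 ^ (n - 1) - 4), 1:] ^ (2 ^ (n - 1) - 3)"
    unfolding F_def card_V card_top card_top_minus_1 by simp
  finally show ?thesis
    unfolding F_def card_V image by (simp add: h_def)
qed

theorem theorem4p2:
  fixes n :: nat
  assumes "n \<ge> 4"
  shows "char_poly (dist_laplacian (qd_carrier n) (qd_mult n)) =
           [:0, 1:]
         * [:- (2 ^ n - 2), 1:] ^ (2 ^ (n - 2))
         * [:- (2 ^ n), 1:] ^ (2 ^ (n - 2))
         * [:- (2 ^ n + 2 ^ (n - 1) - 4), 1:] ^ (2 ^ (n - 1) - 3)"
proof -
  let ?V = "nc_vertices (qd_carrier n) (qd_mult n)"
  have "0 \<in> qd_part n ` ?V" "2 ^ (n - 2) \<in> qd_part n ` ?V"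
    by (simp_all add: qd_part_image[OF assms])
  then have two_parts: "\<exists>x\<in>?V. \<exists>y\<in>?V. qd_part n x \<noteq> qd_part n y"
    by (metis imageE power_not_zero zero_neq_numeral)
  have finite: "finite ?V"
    unfolding nc_vertices_qd_eq_Un[OF assms] by simp
  have "char_poly (dist_laplacian (qd_carrier n) (qd_mult n))
    = [:0, 1:] * ([:- real (card ?V), 1:] ^ (card (qd_part n ` ?V) - 1)
      * (\<Prod>c\<in>qd_part n ` ?V. [:- (real (card ?V) + card {x \<in> ?V. qd_part n x = c}), 1:]
          ^ (card {x \<in> ?V. qd_part n x = c} - 1)))"
    unfolding mult.assoc[symmetric] using finite two_parts qd_mult_commute_iff_qd_part[OF assms]
    by (intro char_poly_dist_laplacian_if_commuting_parts) auto
  then show ?thesis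
    unfolding dist_laplacian_factors_qd[OF assms] by (simp only: mult.assoc)
qed

end
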